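(* Let $\Phi=(G,\varphi)$ be a $\mathbb{T}$-gain graph on a connected graph $G$ with maximum vertex degree $\Delta$. Then $\rho(A(\Phi))=\Delta$ if and only if $G$ is $\Delta$-regular and either $\Phi$ or $-\Phi$ is balanced.
   Context: Graphs are finite, simple and undirected. $\mathbb{T}=\{z\in\mathbb{C}:|z|=1\}$. A $\mathbb{T}$-gain on $G$ is a map $\varphi$ from oriented edges to $\mathbb{T}$ with $\varphi(\overrightarrow{e_{ts}})=\varphi(\overrightarrow{e_{st}})^{-1}$; $A(\Phi)$ is the Hermitian matrix with $(s,t)$ entry $\varphi(\overrightarrow{e_{st}})$ if $v_s\sim v_t$, else $0$; $\rho$ is the spectral radius. $-\Phi$ denotes the gain graph $(G,-\varphi)$. The gain of a directed cycle is the product of the gains of its oriented edges; $\Phi$ is balanced if every directed cycle has gain $1$. *)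

theory Defs
  imports "HOL-Analysis.Analysis"
begin

definition simple_graph :: "('n::finite \<Rightarrow> 'n \<Rightarrow> bool) \<Rightarrow> bool" where
  "simple_graph E \<longleftrightarrow> (\<forall>u v. E u v \<longrightarrow> E v u) \<and> (\<forall>v. \<not> E v v)"

definition connected_graph :: "('n::finite \<Rightarrow> 'n \<Rightarrow> bool) \<Rightarrow> bool" where
  "connected_graph E \<longleftrightarrow> (\<forall>u v. E\<^sup>*\<^sup>* u v)"

definition degree :: "('n::finite \<Rightarrow> 'n \<Rightarrow> bool) \<Rightarrow> 'n \<Rightarrow> nat" where
  "degree E v = card {w. E v w}"

definition max_degree :: "('n::finite \<Rightarrow> 'n \<Rightarrow> bool) \<Rightarrow> nat" where
  "max_degree E = Max (range (degree E))"

definition regular :: "('n::finite \<Rightarrow> 'n \<Rightarrow> bool) \<Rightarrow> nat \<Rightarrow> bool" where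
  "regular E k \<longleftrightarrow> (\<forall>v. degree E v = k)"

text \<open>A T-gain on E: phi s t is the gain of the oriented edge from s to t;
  it has modulus one and phi t s = (phi s t)^-1 on edges.\<close>

definition T_gain :: "('n::finite \<Rightarrow> 'n \<Rightarrow> bool) \<Rightarrow> ('n \<Rightarrow> 'n \<Rightarrow> complex) \<Rightarrow> bool" where
  "T_gain E \<phi> \<longleftrightarrow> (\<forall>s t. E s t \<longrightarrow> cmod (\<phi> s t) = 1 \<and> \<phi> t s = inverse (\<phi> s t))"

definition gain_adj :: "('n::finite \<Rightarrow> 'n \<Rightarrow> bool) \<Rightarrow> ('n \<Rightarrow> 'n \<Rightarrow> complex) \<Rightarrow> complex^'n^'n" where
  "gain_adj E \<phi> = (\<chi> s t. if E s t then \<phi> s t else 0)"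

definition directed_cycle :: "('n::finite \<Rightarrow> 'n \<Rightarrow> bool) \<Rightarrow> 'n list \<Rightarrow> bool" where
  "directed_cycle E vs \<longleftrightarrow> distinct vs \<and> length vs \<ge> 3 \<and>
     (\<forall>i < length vs. E (vs ! i) (vs ! ((i + 1) mod length vs)))"

definition cycle_gain :: "('n \<Rightarrow> 'n \<Rightarrow> complex) \<Rightarrow> 'n list \<Rightarrow> complex" where
  "cycle_gain \<phi> vs = (\<Prod>i < length vs. \<phi> (vs ! i) (vs ! ((i + 1) mod length vs)))"

definition balanced :: "('n::finite \<Rightarrow> 'n \<Rightarrow> bool) \<Rightarrow> ('n \<Rightarrow> 'n \<Rightarrow> complex) \<Rightarrow> bool" where
  "balanced E \<phi> \<longleftrightarrow> (\<forall>vs. directed_cycle E vs \<longrightarrow> cycle_gain \<phi> vs = 1)"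

definition eigenvalues :: "complex^'n^'n \<Rightarrow> complex set" where
  "eigenvalues A = {c. \<exists>v. v \<noteq> 0 \<and> A *v v = c *s v}"

definition spectral_radius :: "complex^'n::finite^'n \<Rightarrow> real" where
  "spectral_radius A = Max (cmod ` eigenvalues A)"

end

theory Submission
  imports Defs "Jordan_Normal_Form.Char_Poly"
begin

(* Let A(Phi) v = c v and let s be an entry of v of maximal modulus M. Then
  |c| M = |sum over neighbours t of phi(s,t) v_t| <= deg(s) M <= Delta M, so |c| <= Delta.
  If |c| = Delta, both inequalities are equalities: deg(s) = Delta, and equality in the
  triangle inequality forces phi(s,t) v_t = (c / Delta) v_s for every neighbour t, which
  therefore again has modulus M. By connectivity this spreads to every vertex, so G is
  Delta-regular and phi(s,t) v_t = eps v_s on all edges, where eps = c / Delta satisfies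
  eps^2 = 1 if there is an edge (go along it and back). Thus v is a switching function for Phi or -Phi,
  which makes every cycle gain a telescoping product equal to 1.
  Conversely, in a balanced connected gain graph every closed walk has gain 1 (it splits
  into cycles and edges traversed back and forth), so walk gains to a fixed root define a
  switching function x with phi(s,t) x_t = x_s; in a Delta-regular graph x is an eigenvector
  for Delta, and for -Delta when -Phi is balanced. *)

no_notation Matrix.vec_index (infixl "$" 100)

section \<open>Eigenvalues via the characteristic polynomial\<close>

lemma eigenvalues_eq_jnf_eigenvalues:
  fixes A :: "complex^'n::finite^'n"
  assumes f: "bij_betw f {0..<CARD('n)} UNIV"
  shows "eigenvalues A =
    Collect (eigenvalue (Matrix.mat CARD('n) CARD('n) (\<lambda>(i, j). A $ f i $ f j)))"
proof -
  let ?n = "CARD('n)"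
  let ?B = "Matrix.mat ?n ?n (\<lambda>(i, j). A $ f i $ f j)"
  let ?g = "inv_into {0..<?n} f"
  have g_less: "?g s < ?n" for s
    using f by (metis UNIV_I atLeastLessThan_iff bij_betw_def inv_into_into)
  have f_g: "f (?g s) = s" for s
    using f by (meson UNIV_I bij_betw_inv_into_right)
  have g_f: "i < ?n \<Longrightarrow> ?g (f i) = i" for i
    using f by (simp add: bij_betw_inv_into_left)
  define to_jnf :: "complex^'n \<Rightarrow> complex Matrix.vec"
    where "to_jnf v = Matrix.vec ?n (\<lambda>i. v $ f i)" for v
  have bij: "bij_betw to_jnf UNIV (carrier_vec ?n)"
  proof (rule bij_betwI)
    show "to_jnf \<in> UNIV \<rightarrow> carrier_vec ?n" unfolding to_jnf_def by auto
    show "(\<lambda>w. \<chi> s. vec_index w (?g s)) \<in> carrier_vec ?n \<rightarrow> UNIV" by simp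
    show "(\<chi> s. vec_index (to_jnf v) (?g s)) = v" for v
      unfolding to_jnf_def by (simp add: Finite_Cartesian_Product.vec_eq_iff g_less f_g)
    show "to_jnf (\<chi> s. vec_index w (?g s)) = w" if "w \<in> carrier_vec ?n" for w
      using that unfolding to_jnf_def by (intro eq_vecI) (auto simp: g_f)
  qed
  then have inj: "inj to_jnf" and range: "range to_jnf = carrier_vec ?n"
    by (auto simp: bij_betw_def)
  have zero: "to_jnf 0 = 0\<^sub>v ?n" unfolding to_jnf_def by auto
  have smult: "to_jnf (k *s v) = k \<cdot>\<^sub>v to_jnf v" for k v unfolding to_jnf_def by auto
  have mult: "to_jnf (A *v v) = ?B *\<^sub>v to_jnf v" for v
  proof -
    have "(\<Sum>t\<in>UNIV. h t) = (\<Sum>j<?n. h (f j))" for h :: "'n \<Rightarrow> complex"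
      using sum.reindex[of f "{0..<?n}" h] f unfolding bij_betw_def by (simp add: lessThan_atLeast0)
    then show ?thesis unfolding to_jnf_def
      by (intro eq_vecI) (auto simp: matrix_vector_mult_def scalar_prod_def lessThan_atLeast0)
  qed
  have "k \<in> eigenvalues A \<longleftrightarrow>
      (\<exists>v. to_jnf v \<noteq> 0\<^sub>v ?n \<and> ?B *\<^sub>v to_jnf v = k \<cdot>\<^sub>v to_jnf v)" for k
    unfolding eigenvalues_def zero[symmetric] mult[symmetric] smult[symmetric] inj_eq[OF inj]
    by simp
  also have "\<dots> k \<longleftrightarrow> (\<exists>w \<in> range to_jnf. w \<noteq> 0\<^sub>v ?n \<and> ?B *\<^sub>v w = k \<cdot>\<^sub>v w)" for k
    by blast
  also have "\<dots> k \<longleftrightarrow> eigenvalue ?B k" for k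
    unfolding range eigenvalue_def eigenvector_def by auto
  finally show ?thesis by auto
qed

lemma finite_eigenvalues: "finite (eigenvalues A)"
  and eigenvalues_nonempty: "eigenvalues A \<noteq> {}"
  for A :: "complex^'n::finite^'n"
proof -
  obtain f :: "nat \<Rightarrow> 'n" where f: "bij_betw f {0..<CARD('n)} UNIV"
    using ex_bij_betw_nat_finite[of "UNIV :: 'n set"] by auto
  define B where "B = Matrix.mat CARD('n) CARD('n) (\<lambda>(i, j). A $ f i $ f j)"
  have B: "B \<in> carrier_mat CARD('n) CARD('n)" unfolding B_def by simp
  have roots: "eigenvalues A = {k. poly (char_poly B) k = 0}"
    using eigenvalues_eq_jnf_eigenvalues[OF f] eigenvalue_root_char_poly[OF B]
    unfolding B_def by auto
  have "Polynomial.degree (char_poly B) = CARD('n)"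
    using degree_monic_char_poly[OF B] by simp
  then have deg: "Polynomial.degree (char_poly B) > 0" by simp
  then have "\<not> constant (poly (char_poly B))" by (simp add: constant_degree)
  then show "eigenvalues A \<noteq> {}"
    unfolding roots using fundamental_theorem_of_algebra by blast
  have "char_poly B \<noteq> 0" using deg by auto
  then show "finite (eigenvalues A)"
    unfolding roots by (rule poly_roots_finite)
qed

lemma spectral_radius_eq_iff:
  assumes "\<forall>c \<in> eigenvalues A. cmod c \<le> r"
  shows "spectral_radius A = r \<longleftrightarrow> (\<exists>c \<in> eigenvalues A. cmod c = r)"
  unfolding spectral_radius_def using assms finite_eigenvalues[of A] eigenvalues_nonempty[of A]
  by (subst Max_eq_iff) auto

section \<open>Walks and their gains\<close>

fun walk :: "('n \<Rightarrow> 'n \<Rightarrow> bool) \<Rightarrow> 'n list \<Rightarrow> bool" where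
  "walk E (a # b # vs) \<longleftrightarrow> E a b \<and> walk E (b # vs)"
| "walk E _ \<longleftrightarrow> True"

fun walk_gain :: "('n \<Rightarrow> 'n \<Rightarrow> complex) \<Rightarrow> 'n list \<Rightarrow> complex" where
  "walk_gain \<phi> (a # b # vs) = \<phi> a b * walk_gain \<phi> (b # vs)"
| "walk_gain \<phi> _ = 1"

lemma walk_append: "walk E (xs @ y # ys) \<longleftrightarrow> walk E (xs @ [y]) \<and> walk E (y # ys)"
  by (induction xs rule: induct_list012) auto

lemma walk_gain_append:
  "walk_gain \<phi> (xs @ y # ys) = walk_gain \<phi> (xs @ [y]) * walk_gain \<phi> (y # ys)"
  by (induction xs rule: induct_list012) auto

lemma walk_rev: "simple_graph E \<Longrightarrow> walk E vs \<Longrightarrow> walk E (rev vs)"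
proof (induction vs rule: induct_list012)
  case (3 a b vs)
  then have "walk E (rev (b # vs))" and "E b a" unfolding simple_graph_def by auto
  then show ?case using walk_append[of E "rev vs" b "[a]"] by simp
qed auto

lemma walk_gain_rev:
  "T_gain E \<phi> \<Longrightarrow> walk E vs \<Longrightarrow> walk_gain \<phi> (rev vs) = inverse (walk_gain \<phi> vs)"
proof (induction vs rule: induct_list012)
  case (3 a b vs)
  then have "walk_gain \<phi> (rev (b # vs)) = inverse (walk_gain \<phi> (b # vs))"
    and "\<phi> b a = inverse (\<phi> a b)" unfolding T_gain_def by auto
  then show ?case using walk_gain_append[of \<phi> "rev vs" b "[a]"] by (simp add: mult.commute)
qed auto

lemma norm_walk_gain: "T_gain E \<phi> \<Longrightarrow> walk E vs \<Longrightarrow> cmod (walk_gain \<phi> vs) = 1"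
  by (induction vs rule: induct_list012) (auto simp: T_gain_def norm_mult)

lemma walk_gain_eq_prod:
  "walk_gain \<phi> (vs @ [z]) = (\<Prod>i<length vs. \<phi> (vs ! i) ((vs @ [z]) ! Suc i))"
proof (induction vs rule: induct_list012)
  case (3 a b vs)
  then show ?case
    unfolding length_Cons prod.lessThan_Suc_shift by (simp del: prod.lessThan_Suc)
qed auto

lemma walk_iff_nth: "walk E (vs @ [z]) \<longleftrightarrow> (\<forall>i < length vs. E (vs ! i) ((vs @ [z]) ! Suc i))"
proof (induction vs rule: induct_list012)
  case (3 a b vs)
  then show ?case by (simp add: All_less_Suc2)
qed auto

lemma nth_append_hd_Suc:
  assumes "i < length vs"
  shows "(vs @ [hd vs]) ! Suc i = vs ! ((i + 1) mod length vs)"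
proof -
  have "vs \<noteq> []" using assms by auto
  then show ?thesis
    using assms by (cases "Suc i = length vs") (auto simp: nth_append hd_conv_nth)
qed

lemma cycle_gain_eq_walk_gain: "vs \<noteq> [] \<Longrightarrow> cycle_gain \<phi> vs = walk_gain \<phi> (vs @ [hd vs])"
  unfolding cycle_gain_def walk_gain_eq_prod by (rule prod.cong) (auto simp: nth_append_hd_Suc)

lemma directed_cycle_iff_walk:
  "directed_cycle E vs \<longleftrightarrow> distinct vs \<and> length vs \<ge> 3 \<and> walk E (vs @ [hd vs])"
  unfolding directed_cycle_def walk_iff_nth by (auto simp: nth_append_hd_Suc)

lemma walk_gain_distinct_closed_walk:
  assumes "simple_graph E" and "T_gain E \<phi>" and "balanced E \<phi>"
    and "distinct vs" and "vs \<noteq> []" and "walk E (vs @ [hd vs])"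
  shows "walk_gain \<phi> (vs @ [hd vs]) = 1"
proof -
  obtain a ws where vs: "vs = a # ws" using \<open>vs \<noteq> []\<close> by (cases vs) auto
  consider "ws = []" | b where "ws = [b]" | "length ws \<ge> 2"
    by (cases ws rule: remdups_adj.cases) auto
  then show ?thesis
  proof cases
    case 1
    then show ?thesis using assms(1,6) vs by (simp add: simple_graph_def)
  next
    case (2 b)
    then have "E a b" using assms(6) vs by simp
    then have "\<phi> b a = inverse (\<phi> a b)" and "\<phi> a b \<noteq> 0"
      using assms(2) unfolding T_gain_def by (metis norm_zero zero_neq_one)+
    then show ?thesis using vs 2 by simp
  next
    case 3
    then have "directed_cycle E vs" using assms(4,6) vs by (simp add: directed_cycle_iff_walk)
    then show ?thesis
      using assms(3,5) cycle_gain_eq_walk_gain[of vs \<phi>] by (simp add: balanced_def)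
  qed
qed

lemma walk_gain_closed_walk:
  assumes sg: "simple_graph E" and tg: "T_gain E \<phi>" and bal: "balanced E \<phi>"
  shows "walk E vs \<Longrightarrow> vs \<noteq> [] \<Longrightarrow> hd vs = last vs \<Longrightarrow> walk_gain \<phi> vs = 1"
proof (induction "length vs" arbitrary: vs rule: less_induct)
  case less
  obtain ws a where vs: "vs = ws @ [a]" using less.prems(2) by (metis rev_exhaust)
  show ?case
  proof (cases "ws = []")
    case True
    then show ?thesis using vs by simp
  next
    case ws_ne: False
    then have hd_ws: "hd ws = a" using less.prems(3) vs by simp
    show ?thesis
    proof (cases "distinct ws")
      case True
      then show ?thesis
        using walk_gain_distinct_closed_walk[OF sg tg bal True ws_ne] less.prems(1) vs hd_ws by simp
    next
      case False
      then obtain xs y ys zs where "ws = xs @ [y] @ ys @ [y] @ zs"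
        using not_distinct_decomp by blast
      then have vs': "vs = xs @ y # ys @ y # zs @ [a]" using vs by simp
      let ?loop = "y # ys @ [y]" and ?rest = "xs @ y # zs @ [a]"
      have "walk E (xs @ [y])" and "walk E ?loop" and "walk E (y # zs @ [a])"
        using less.prems(1) walk_append[of E xs y "ys @ y # zs @ [a]"]
          walk_append[of E "y # ys" y "zs @ [a]"] by (auto simp: vs')
      then have "walk E ?rest" using walk_append[of E xs y "zs @ [a]"] by simp
      have "walk_gain \<phi> ?loop = 1"
        by (rule less.hyps) (use \<open>walk E ?loop\<close> in \<open>auto simp: vs'\<close>)
      moreover have "walk_gain \<phi> ?rest = 1"
      proof (rule less.hyps)
        show "hd ?rest = last ?rest" using less.prems(3) vs' by (cases xs) auto
      qed (use \<open>walk E ?rest\<close> in \<open>auto simp: vs'\<close>)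
      moreover have "walk_gain \<phi> vs = walk_gain \<phi> ?loop * walk_gain \<phi> ?rest"
        using walk_gain_append[of \<phi> xs y "ys @ y # zs @ [a]"]
          walk_gain_append[of \<phi> xs y "zs @ [a]"]
          walk_gain_append[of \<phi> "y # ys" y "zs @ [a]"] by (simp add: vs')
      ultimately show ?thesis by simp
    qed
  qed
qed

lemma walk_gain_path_independent:
  assumes sg: "simple_graph E" and tg: "T_gain E \<phi>" and bal: "balanced E \<phi>"
    and p: "walk E p" "p \<noteq> []" and q: "walk E q" "q \<noteq> []"
    and same_start: "hd p = hd q" and same_end: "last p = last q"
  shows "walk_gain \<phi> p = walk_gain \<phi> q"
proof -
  obtain ps z where ps: "p = ps @ [z]" using p(2) by (metis rev_exhaust)
  have "rev q \<noteq> []" and "hd (rev q) = z" using q(2) same_end by (simp_all add: hd_rev ps)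
  then obtain qs where qs: "rev q = z # qs" by (metis list.collapse)
  let ?c = "ps @ z # qs"
  have "walk E (z # qs)" using walk_rev[OF sg q(1)] qs by simp
  then have "walk E ?c" using walk_append[of E ps z qs] p(1) ps by simp
  moreover have "hd ?c = last ?c"
  proof -
    have "hd ?c = hd p" unfolding ps by (cases ps) simp_all
    moreover have "last ?c = hd q" using q(2) qs last_rev[of q] by simp
    ultimately show ?thesis using same_start by simp
  qed
  ultimately have "walk_gain \<phi> ?c = 1" by (intro walk_gain_closed_walk[OF sg tg bal]) simp_all
  moreover have "walk_gain \<phi> ?c = walk_gain \<phi> p * inverse (walk_gain \<phi> q)"
    using walk_gain_rev[OF tg q(1)] walk_gain_append[of \<phi> ps z qs] ps qs by simp
  moreover have "walk_gain \<phi> q \<noteq> 0" using norm_walk_gain[OF tg q(1)] by auto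
  ultimately show ?thesis by (simp add: field_simps)
qed

section \<open>Balance and switching functions\<close>

text \<open>A potential is a switching function that turns the gain graph into one with all gains 1:
  on every edge \<open>\<phi> s t = x s / x t\<close>.\<close>

definition potential ::
    "('n \<Rightarrow> 'n \<Rightarrow> bool) \<Rightarrow> ('n \<Rightarrow> 'n \<Rightarrow> complex) \<Rightarrow> ('n \<Rightarrow> complex) \<Rightarrow> bool"
  where "potential E \<phi> x \<longleftrightarrow> (\<forall>s. x s \<noteq> 0) \<and> (\<forall>s t. E s t \<longrightarrow> \<phi> s t * x t = x s)"

lemma walk_gain_potential:
  assumes "potential E \<phi> x" and "walk E vs" and "vs \<noteq> []"
  shows "walk_gain \<phi> vs = x (hd vs) / x (last vs)"
  using assms(2,3)
proof (induction vs rule: induct_list012)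
  case (3 a b vs)
  then have "\<phi> a b = x a / x b" and "x b \<noteq> 0"
    using assms(1) unfolding potential_def by (auto simp: eq_divide_eq)
  then show ?case using 3 by simp
qed (use assms(1) in \<open>auto simp: potential_def\<close>)

lemma balanced_if_potential:
  assumes "potential E \<phi> x"
  shows "balanced E \<phi>"
  unfolding balanced_def
proof (intro allI impI)
  fix vs
  assume "directed_cycle E vs"
  then have "walk E (vs @ [hd vs])" and "vs \<noteq> []" by (auto simp: directed_cycle_iff_walk)
  then show "cycle_gain \<phi> vs = 1"
    using walk_gain_potential[OF assms] assms cycle_gain_eq_walk_gain[of vs \<phi>]
    by (simp add: potential_def)
qed

lemma walk_if_rtranclp:
  "E\<^sup>*\<^sup>* s r \<Longrightarrow> \<exists>vs. walk E vs \<and> vs \<noteq> [] \<and> hd vs = s \<and> last vs = r"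
proof (induction rule: converse_rtranclp_induct)
  case base
  show ?case by (intro exI[of _ "[r]"]) simp
next
  case (step s s')
  then obtain vs where "walk E vs" "vs \<noteq> []" "hd vs = s'" "last vs = r" by blast
  then show ?case using step(1) by (intro exI[of _ "s # vs"]) (cases vs, auto)
qed

lemma potential_if_balanced:
  fixes E :: "'n::finite \<Rightarrow> 'n \<Rightarrow> bool"
  assumes sg: "simple_graph E" and con: "connected_graph E" and tg: "T_gain E \<phi>"
    and bal: "balanced E \<phi>"
  obtains x where "potential E \<phi> x"
proof -
  fix r :: 'n
  have "\<forall>s. \<exists>vs. walk E vs \<and> vs \<noteq> [] \<and> hd vs = s \<and> last vs = r"
  proof
    fix s
    show "\<exists>vs. walk E vs \<and> vs \<noteq> [] \<and> hd vs = s \<and> last vs = r"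
      using con unfolding connected_graph_def by (intro walk_if_rtranclp) simp
  qed
  then obtain P where P: "\<forall>s. walk E (P s) \<and> P s \<noteq> [] \<and> hd (P s) = s \<and> last (P s) = r"
    by (rule choice[THEN exE])
  define x where "x s = walk_gain \<phi> (P s)" for s
  have "potential E \<phi> x"
    unfolding potential_def
  proof (intro conjI allI impI)
    fix s
    have "cmod (x s) = 1" unfolding x_def using P by (intro norm_walk_gain[OF tg]) simp
    then show "x s \<noteq> 0" by auto
  next
    fix s t
    assume "E s t"
    obtain vs where vs: "P t = t # vs" using P by (metis list.collapse)
    have "walk E (s # P t)" using \<open>E s t\<close> spec[OF P, of t] vs by simp
    then have "walk_gain \<phi> (s # P t) = x s"
      unfolding x_def using spec[OF P, of s] spec[OF P, of t]
      by (intro walk_gain_path_independent[OF sg tg bal]) auto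
    moreover have "walk_gain \<phi> (s # P t) = \<phi> s t * x t"
      unfolding x_def vs by simp
    ultimately show "\<phi> s t * x t = x s" by simp
  qed
  then show thesis by (rule that)
qed

lemma T_gain_uminus: "T_gain E \<phi> \<Longrightarrow> T_gain E (\<lambda>s t. - \<phi> s t)"
  unfolding T_gain_def by simp

lemma balanced_or_uminus_balanced_if_scaled_potential:
  assumes sg: "simple_graph E" and tg: "T_gain E \<phi>"
    and nz: "\<forall>s. x s \<noteq> 0" and rel: "\<forall>s t. E s t \<longrightarrow> \<phi> s t * x t = \<epsilon> * x s"
  shows "balanced E \<phi> \<or> balanced E (\<lambda>s t. - \<phi> s t)"
proof (cases "\<exists>s t. E s t")
  case False
  then have "potential E \<phi> x" using nz unfolding potential_def by blast
  then show ?thesis using balanced_if_potential by blast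
next
  case True
  then obtain s t where st: "E s t" by blast
  then have ts: "E t s" using sg unfolding simple_graph_def by blast
  have "\<phi> s t * \<phi> t s = 1"
    using tg st unfolding T_gain_def by (metis norm_zero right_inverse zero_neq_one)
  have e1: "\<epsilon> * x s = \<phi> s t * x t" and e2: "\<epsilon> * x t = \<phi> t s * x s"
    using rel st ts by auto
  have "(\<epsilon> * \<epsilon>) * (x s * x t) = (\<epsilon> * x s) * (\<epsilon> * x t)" by (simp add: algebra_simps)
  also have "\<dots> = (\<phi> s t * \<phi> t s) * (x s * x t)"
    unfolding e1 e2 by (simp add: algebra_simps)
  also have "\<dots> = x s * x t" using \<open>\<phi> s t * \<phi> t s = 1\<close> by simp
  finally have "\<epsilon> * \<epsilon> = 1" using nz by simp
  then consider "\<epsilon> = 1" | "\<epsilon> = - 1" by (auto simp: square_eq_1_iff)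
  then show ?thesis
  proof cases
    case 1
    then have "potential E \<phi> x" using nz rel unfolding potential_def by simp
    then show ?thesis using balanced_if_potential by blast
  next
    case 2
    then have "potential E (\<lambda>s t. - \<phi> s t) x" using nz rel unfolding potential_def by simp
    then show ?thesis using balanced_if_potential by blast
  qed
qed

section \<open>The spectrum of the gain adjacency matrix\<close>

lemma gain_adj_mult_nth: "(gain_adj E \<phi> *v v) $ s = (\<Sum>t | E s t. \<phi> s t * v $ t)"
proof -
  have "(gain_adj E \<phi> *v v) $ s = (\<Sum>t\<in>UNIV. if E s t then \<phi> s t * v $ t else 0)"
    unfolding gain_adj_def matrix_vector_mult_def by (auto intro: sum.cong)
  also have "\<dots> = (\<Sum>t | E s t. \<phi> s t * v $ t)"
    by (simp add: sum.If_cases)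
  finally show ?thesis .
qed

lemma gain_adj_uminus: "gain_adj E (\<lambda>s t. - \<phi> s t) = - gain_adj E \<phi>"
  unfolding gain_adj_def by (simp add: Finite_Cartesian_Product.vec_eq_iff)

lemma mem_eigenvalues_uminus_iff: "c \<in> eigenvalues (- A) \<longleftrightarrow> - c \<in> eigenvalues A"
proof -
  have "(- A) *v v = c *s v \<longleftrightarrow> A *v v = (- c) *s v" for v
    by (auto simp: Finite_Cartesian_Product.vec_eq_iff matrix_vector_mult_def sum_negf
        minus_equation_iff)
  then show ?thesis unfolding eigenvalues_def by simp
qed

lemma of_nat_mem_eigenvalues_if_potential:
  assumes "regular E d" and "potential E \<phi> x"
  shows "of_nat d \<in> eigenvalues (gain_adj E \<phi>)"
proof -
  define v where "v = (\<chi> s. x s)"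
  have "(gain_adj E \<phi> *v v) $ s = (of_nat d *s v) $ s" for s
  proof -
    have "(gain_adj E \<phi> *v v) $ s = (\<Sum>t | E s t. x s)"
      using assms(2) unfolding gain_adj_mult_nth v_def potential_def by simp
    also have "\<dots> = of_nat d * x s"
      using assms(1) unfolding regular_def degree_def by simp
    finally show ?thesis unfolding v_def by simp
  qed
  moreover have "v \<noteq> 0"
    using assms(2) unfolding potential_def v_def by (auto simp: Finite_Cartesian_Product.vec_eq_iff)
  ultimately show ?thesis
    unfolding eigenvalues_def by (auto simp: Finite_Cartesian_Product.vec_eq_iff)
qed

lemma degree_le_max_degree: "degree E s \<le> max_degree E"
  unfolding max_degree_def by (rule Max_ge) auto

lemma norm_gain_adj_mult_nth_le:
  fixes M :: real
  assumes "T_gain E \<phi>" and "\<forall>t. cmod (v $ t) \<le> M"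
  shows "cmod ((gain_adj E \<phi> *v v) $ s) \<le> degree E s * M"
proof -
  have "cmod ((gain_adj E \<phi> *v v) $ s) \<le> (\<Sum>t | E s t. cmod (\<phi> s t * v $ t))"
    unfolding gain_adj_mult_nth by (rule norm_sum)
  also have "\<dots> \<le> (\<Sum>t | E s t. M)"
    using assms by (intro sum_mono) (simp add: T_gain_def norm_mult)
  finally show ?thesis by (simp add: degree_def)
qed

lemma exists_max_norm_entry:
  fixes v :: "complex^'n::finite"
  assumes "v \<noteq> 0"
  obtains s where "v $ s \<noteq> 0" and "\<forall>t. cmod (v $ t) \<le> cmod (v $ s)"
proof -
  have "Max (range (\<lambda>t. cmod (v $ t))) \<in> range (\<lambda>t. cmod (v $ t))"
    by (rule Max_in) auto
  then obtain s where s: "cmod (v $ s) = Max (range (\<lambda>t. cmod (v $ t)))"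
    by (metis rangeE)
  then have "\<forall>t. cmod (v $ t) \<le> cmod (v $ s)" by simp
  moreover from this have "v $ s \<noteq> 0"
    using assms by (auto simp: Finite_Cartesian_Product.vec_eq_iff)
  ultimately show thesis by (rule that[rotated])
qed

lemma norm_eigenvalue_le_max_degree:
  assumes "T_gain E \<phi>" and "c \<in> eigenvalues (gain_adj E \<phi>)"
  shows "cmod c \<le> max_degree E"
proof -
  obtain v where v: "v \<noteq> 0" and ev: "gain_adj E \<phi> *v v = c *s v"
    using assms(2) unfolding eigenvalues_def by blast
  obtain s where nz: "v $ s \<noteq> 0" and max: "\<forall>t. cmod (v $ t) \<le> cmod (v $ s)"
    using v by (rule exists_max_norm_entry)
  have "cmod c * cmod (v $ s) = cmod ((gain_adj E \<phi> *v v) $ s)"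
    unfolding ev by (simp add: norm_mult)
  also have "\<dots> \<le> degree E s * cmod (v $ s)"
    by (rule norm_gain_adj_mult_nth_le[OF assms(1) max])
  also have "\<dots> \<le> max_degree E * cmod (v $ s)"
    using degree_le_max_degree[of E s] by (intro mult_right_mono) auto
  finally show ?thesis using nz by simp
qed

text \<open>Equality case of the triangle inequality: for the mean w we get |w| = M, and the numbers
  Re (cnj w * z u), each at most M^2, sum to card T * M^2; so all of them equal M^2, which
  gives |z t - w|^2 <= 0.\<close>

lemma eq_mean_if_norm_sum_eq_card_mult:
  fixes z :: "'a \<Rightarrow> complex" and M :: real
  assumes "finite T" and bound: "\<forall>t\<in>T. cmod (z t) \<le> M"
    and eq: "cmod (\<Sum>t\<in>T. z t) = card T * M" and "t \<in> T"
  shows "z t = (\<Sum>t\<in>T. z t) / card T"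
proof -
  define w where "w = (\<Sum>t\<in>T. z t) / card T"
  have card: "card T > 0" using assms(1,4) card_gt_0_iff by blast
  then have sum: "(\<Sum>t\<in>T. z t) = card T * w" unfolding w_def by simp
  have norm_w: "cmod w = M" using eq card unfolding w_def by (simp add: norm_divide)
  have re_le: "Re (cnj w * z u) \<le> M * M" if "u \<in> T" for u
  proof -
    have "Re (cnj w * z u) \<le> cmod (cnj w * z u)" by (rule complex_Re_le_cmod)
    also have "\<dots> = M * cmod (z u)" using norm_w by (simp add: norm_mult)
    also have "\<dots> \<le> M * M"
      using bound that norm_w norm_ge_zero[of w] by (intro mult_left_mono) auto
    finally show ?thesis .
  qed
  have "(\<Sum>u\<in>T. Re (cnj w * z u)) = Re (cnj w * (card T * w))"
    by (simp add: sum_distrib_left flip: sum)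
  also have "\<dots> = card T * (cmod w)\<^sup>2"
    unfolding cmod_power2 by (simp add: power2_eq_square algebra_simps)
  also have "\<dots> = card T * (M * M)"
    using norm_w by (simp add: power2_eq_square)
  finally have "(\<Sum>u\<in>T. M * M - Re (cnj w * z u)) = 0"
    by (simp add: sum_subtractf)
  moreover have "\<forall>u\<in>T. 0 \<le> M * M - Re (cnj w * z u)" using re_le by simp
  ultimately have "Re (cnj w * z t) = M * M"
    using sum_nonneg_eq_0_iff[OF assms(1), of "\<lambda>u. M * M - Re (cnj w * z u)"] assms(4) by simp
  have "(cmod (z t - w))\<^sup>2 = (cmod (z t))\<^sup>2 + (cmod w)\<^sup>2 - 2 * Re (cnj w * z t)"
    unfolding cmod_power2 by (simp add: power2_eq_square algebra_simps)
  also have "\<dots> \<le> M\<^sup>2 + M\<^sup>2 - 2 * (M * M)"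
    using power_mono[OF bound[rule_format, OF assms(4)] norm_ge_zero, of 2] norm_w
      \<open>Re (cnj w * z t) = M * M\<close> by simp
  also have "\<dots> = 0" by (simp add: power2_eq_square)
  finally have "(cmod (z t - w))\<^sup>2 \<le> 0" .
  then show ?thesis unfolding w_def by simp
qed

lemma eigenvector_max_entry_neighbour:
  assumes tg: "T_gain E \<phi>" and ev: "gain_adj E \<phi> *v v = c *s v"
    and c: "cmod c = max_degree E"
    and max: "\<forall>t. cmod (v $ t) \<le> cmod (v $ s)" and nz: "v $ s \<noteq> 0"
  shows "degree E s = max_degree E"
    and "E s t \<Longrightarrow> \<phi> s t * v $ t = c / of_nat (max_degree E) * v $ s"
    and "E s t \<Longrightarrow> cmod (v $ t) = cmod (v $ s)"
proof -
  let ?M = "cmod (v $ s)" and ?\<Delta> = "max_degree E" and ?N = "{t. E s t}"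
  have row: "(\<Sum>u\<in>?N. \<phi> s u * v $ u) = c * v $ s"
    using ev gain_adj_mult_nth[of E \<phi> v s] by simp
  have "?\<Delta> * ?M = cmod ((gain_adj E \<phi> *v v) $ s)" using ev c by (simp add: norm_mult)
  also have "\<dots> \<le> degree E s * ?M" by (rule norm_gain_adj_mult_nth_le[OF tg max])
  finally have "?\<Delta> \<le> degree E s" using nz by simp
  then show deg: "degree E s = ?\<Delta>" using degree_le_max_degree[of E s] by linarith
  have neighbour: "\<phi> s t * v $ t = c / of_nat ?\<Delta> * v $ s" if "E s t" for t
  proof -
    have "\<phi> s t * v $ t = (\<Sum>u\<in>?N. \<phi> s u * v $ u) / card ?N"
    proof (rule eq_mean_if_norm_sum_eq_card_mult)
      show "\<forall>u\<in>?N. cmod (\<phi> s u * v $ u) \<le> ?M"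
        using tg max by (simp add: T_gain_def norm_mult)
      show "cmod (\<Sum>u\<in>?N. \<phi> s u * v $ u) = card ?N * ?M"
        using row c deg by (simp add: norm_mult degree_def)
    qed (use that in simp_all)
    then show ?thesis using row deg by (simp add: degree_def)
  qed
  show "E s t \<Longrightarrow> \<phi> s t * v $ t = c / of_nat ?\<Delta> * v $ s" by (rule neighbour)
  assume "E s t"
  then have "degree E s > 0" unfolding degree_def by (auto simp: card_gt_0_iff)
  then have "cmod (c / of_nat ?\<Delta> * v $ s) = ?M"
    using c deg by (simp add: norm_mult norm_divide)
  moreover have "cmod (\<phi> s t) = 1" using tg \<open>E s t\<close> by (simp add: T_gain_def)
  ultimately show "cmod (v $ t) = ?M"
    using neighbour[OF \<open>E s t\<close>] by (metis mult_cancel_right1 norm_mult)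
qed

lemma regular_balanced_if_eigenvalue_max_degree:
  fixes E :: "'n::finite \<Rightarrow> 'n \<Rightarrow> bool"
  assumes sg: "simple_graph E" and con: "connected_graph E" and tg: "T_gain E \<phi>"
    and c: "c \<in> eigenvalues (gain_adj E \<phi>)" "cmod c = max_degree E"
  shows "regular E (max_degree E) \<and> (balanced E \<phi> \<or> balanced E (\<lambda>s t. - \<phi> s t))"
proof -
  obtain v where v: "v \<noteq> 0" and ev: "gain_adj E \<phi> *v v = c *s v"
    using c(1) unfolding eigenvalues_def by blast
  obtain s0 where "v $ s0 \<noteq> 0" and max: "\<forall>t. cmod (v $ t) \<le> cmod (v $ s0)"
    using v by (rule exists_max_norm_entry)
  note neighbour = eigenvector_max_entry_neighbour[OF tg ev c(2)]
  have max_everywhere: "cmod (v $ u) = cmod (v $ s0)" for u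
  proof -
    have "E\<^sup>*\<^sup>* s0 u" using con unfolding connected_graph_def by blast
    then show ?thesis
    proof (induction rule: rtranclp_induct)
      case (step s t)
      then have "\<forall>u. cmod (v $ u) \<le> cmod (v $ s)" and "v $ s \<noteq> 0"
        using max \<open>v $ s0 \<noteq> 0\<close> by (simp, metis norm_eq_zero)
      then show ?case using neighbour(3) step.hyps(2) step.IH by metis
    qed simp
  qed
  then have max_u: "\<forall>t. cmod (v $ t) \<le> cmod (v $ u)" and nz_u: "v $ u \<noteq> 0" for u
    using \<open>v $ s0 \<noteq> 0\<close> by (metis order_refl, metis norm_eq_zero)
  have "regular E (max_degree E)"
    unfolding regular_def using neighbour(1)[OF max_u nz_u] by blast
  moreover have "balanced E \<phi> \<or> balanced E (\<lambda>s t. - \<phi> s t)"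
    using nz_u neighbour(2)[OF max_u nz_u]
    by (intro balanced_or_uminus_balanced_if_scaled_potential[OF sg tg,
          of "\<lambda>s. v $ s" "c / of_nat (max_degree E)"]) auto
  ultimately show ?thesis ..
qed

lemma eigenvalue_norm_eq_if_regular_balanced:
  fixes E :: "'n::finite \<Rightarrow> 'n \<Rightarrow> bool"
  assumes sg: "simple_graph E" and con: "connected_graph E" and tg: "T_gain E \<phi>"
    and reg: "regular E d" and bal: "balanced E \<phi> \<or> balanced E (\<lambda>s t. - \<phi> s t)"
  shows "\<exists>c \<in> eigenvalues (gain_adj E \<phi>). cmod c = d"
proof (cases "balanced E \<phi>")
  case True
  then obtain x where "potential E \<phi> x" using potential_if_balanced[OF sg con tg] by blast
  then have "of_nat d \<in> eigenvalues (gain_adj E \<phi>)"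
    by (rule of_nat_mem_eigenvalues_if_potential[OF reg])
  then show ?thesis by force
next
  case False
  then obtain x where "potential E (\<lambda>s t. - \<phi> s t) x"
    using bal potential_if_balanced[OF sg con T_gain_uminus[OF tg]] by blast
  then have "of_nat d \<in> eigenvalues (gain_adj E (\<lambda>s t. - \<phi> s t))"
    by (rule of_nat_mem_eigenvalues_if_potential[OF reg])
  then have "- of_nat d \<in> eigenvalues (gain_adj E \<phi>)"
    unfolding gain_adj_uminus mem_eigenvalues_uminus_iff .
  then show ?thesis by force
qed

theorem theorem5p3:
  fixes E :: "'n::finite \<Rightarrow> 'n \<Rightarrow> bool" and \<phi> :: "'n \<Rightarrow> 'n \<Rightarrow> complex"
  assumes "simple_graph E" and "connected_graph E" and "T_gain E \<phi>"
  shows "spectral_radius (gain_adj E \<phi>) = real (max_degree E) \<longleftrightarrow>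
         regular E (max_degree E) \<and> (balanced E \<phi> \<or> balanced E (\<lambda>s t. - \<phi> s t))"
proof -
  have "spectral_radius (gain_adj E \<phi>) = real (max_degree E) \<longleftrightarrow>
      (\<exists>c \<in> eigenvalues (gain_adj E \<phi>). cmod c = max_degree E)"
    using norm_eigenvalue_le_max_degree[OF assms(3)] by (intro spectral_radius_eq_iff) blast
  also have "\<dots> \<longleftrightarrow> regular E (max_degree E) \<and> (balanced E \<phi> \<or> balanced E (\<lambda>s t. - \<phi> s t))"
    using regular_balanced_if_eigenvalue_max_degree[OF assms]
      eigenvalue_norm_eq_if_regular_balanced[OF assms] by blast
  finally show ?thesis .
qed

end
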